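(* Let $G=(V,E)$ be a simple undirected graph and let $E'\subseteq E^c$ be such that $G+E'$ is not chordal and $G+(E'\setminus\{f\})$ is chordal for every $f\in E'$. If $ax\ge b$ is facet-defining for $\textnormal{conv}(X(G+E'))$ with $a\ge 0$, and $a'\in\mathbb{R}^{E^c}$ is given by $a'_f=a_f$ if $f\in E^c\setminus E'$ and $a'_f=0$ otherwise, then the inequality $$a'x\ \ge\ b\Big(\sum_{f\in E'}x_f-|E'|+1\Big)$$ is facet-defining for $\textnormal{conv}(X(G))$.
   Context: For a graph $H=(V_H,E_H)$, $E^c(H)=\binom{V_H}{2}\setminus E_H$ (here $E^c=E^c(G)$, and $E^c(G+E')=E^c\setminus E'$); $H+F=(V_H,E_H\cup F)$. For $x\in\{0,1\}^{E^c(H)}$, $E(x)=\{f:x_f=1\}$ and $X(H)=\{x\in\{0,1\}^{E^c(H)}:(V_H,E_H\cup E(x))\text{ is chordal}\}$; a graph is chordal if every cycle with at least four vertices has a chord. *)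

theory Defs
  imports "HOL-Analysis.Analysis"
begin

text \<open>Graphs: a finite vertex set V of a finite type 'a, edges are 2-element subsets.
  0/1 vectors over the non-edges are embedded into real^('a set), with all
  coordinates outside the non-edge set fixed to 0 (this changes neither convex
  hulls, affine dimensions, nor faces).\<close>

definition all_pairs :: "'a set \<Rightarrow> 'a set set" where
  "all_pairs V = {{u, v} | u v. u \<in> V \<and> v \<in> V \<and> u \<noteq> v}"

definition simple_graph :: "'a set \<Rightarrow> 'a set set \<Rightarrow> bool" where
  "simple_graph V E \<longleftrightarrow> E \<subseteq> all_pairs V"

definition nonedges :: "'a set \<Rightarrow> 'a set set \<Rightarrow> 'a set set" where
  "nonedges V E = all_pairs V - E"

definition chordal :: "'a set \<Rightarrow> 'a set set \<Rightarrow> bool" where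
  "chordal V E \<longleftrightarrow>
     (\<forall>cs. distinct cs \<and> length cs \<ge> 4 \<and> set cs \<subseteq> V \<and>
        (\<forall>i < length cs. {cs ! i, cs ! ((i + 1) mod length cs)} \<in> E)
      \<longrightarrow> (\<exists>i < length cs. \<exists>j < length cs. i \<noteq> j \<and>
             j \<noteq> (i + 1) mod length cs \<and> i \<noteq> (j + 1) mod length cs \<and>
             {cs ! i, cs ! j} \<in> E))"

definition chordal_completions :: "'a set \<Rightarrow> 'a set set \<Rightarrow> (real ^ ('a::finite set)) set" where
  "chordal_completions V E =
     {x. (\<forall>f \<in> nonedges V E. x $ f = 0 \<or> x $ f = 1) \<and>
         (\<forall>f. f \<notin> nonedges V E \<longrightarrow> x $ f = 0) \<and>
         chordal V (E \<union> {f \<in> nonedges V E. x $ f = 1})}"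

definition facet_defining :: "('n::euclidean_space) set \<Rightarrow> ('n \<Rightarrow> real) \<Rightarrow> ('n \<Rightarrow> real) \<Rightarrow> bool" where
  "facet_defining P g h \<longleftrightarrow>
     (\<forall>x \<in> P. g x \<ge> h x) \<and> {x \<in> P. g x = h x} facet_of P"

end

theory Submission
  imports Defs
begin

text \<open>
  Write 1_S for the characteristic vector of S. Translation by 1_E' maps X(G+E') into X(G),
  and the points of X(G) that are 1 on all of E' are exactly these translates; on them the
  lifted inequality reads ax \<ge> b. At every other point of X(G) its right-hand side is at
  most 0 \<le> ax, since a \<ge> 0 and hence b \<ge> 0.

  For the dimension count, the complete graph and the complete graph minus one edge are
  chordal, so the affine hull of X(H) contains every vector supported on the non-edges of H.
  Hence the translated facet of conv X(G+E'), together with one translated point off it,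
  affinely spans 1_E' plus all vectors supported on the non-edges outside E'. The remaining
  directions come from the points 1_(E' - {f}), f \<in> E', which lie in X(G) by minimality
  of E' and satisfy the lifted inequality with equality.
\<close>

definition charvec :: "'b set \<Rightarrow> real ^ ('b::finite)" where
  "charvec S = (\<chi> i. if i \<in> S then 1 else 0)"

lemma charvec_nth [simp]: "charvec S $ i = (if i \<in> S then 1 else 0)"
  by (simp add: charvec_def)

lemma inner_charvec: "charvec S \<bullet> x = (\<Sum>i\<in>S. x $ i)"
proof -
  have "charvec S \<bullet> x = (\<Sum>i\<in>UNIV. if i \<in> S then x $ i else 0)"
    unfolding inner_vec_def by (rule sum.cong) auto
  also have "\<dots> = (\<Sum>i\<in>S. x $ i)"
    by (simp add: sum.If_cases)
  finally show ?thesis .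
qed

definition supported_on :: "'b set \<Rightarrow> (real ^ ('b::finite)) set" where
  "supported_on S = {v. \<forall>i. i \<notin> S \<longrightarrow> v $ i = 0}"

lemma subspace_supported_on: "subspace (supported_on S)"
  by (auto simp: subspace_def supported_on_def)

lemma affine_add_sum_mem:
  fixes H :: "'v::real_vector set"
  assumes "affine H" "p \<in> H" "finite I" "\<And>i. i \<in> I \<Longrightarrow> p + d i \<in> H"
  shows "p + (\<Sum>i\<in>I. c i *\<^sub>R d i) \<in> H"
proof -
  let ?S = "(\<lambda>x. - p + x) ` H"
  have S: "subspace ?S"
    using affine_diffs_subspace[OF assms(1,2)] .
  have "d i \<in> ?S" if "i \<in> I" for i
    using assms(4)[OF that] by (auto intro!: image_eqI[where x = "p + d i"])
  then have "(\<Sum>i\<in>I. c i *\<^sub>R d i) \<in> ?S"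
    by (intro subspace_sum[OF S] subspace_scale[OF S]) auto
  then show ?thesis
    by auto
qed

lemma affine_add_supported_mem:
  fixes H :: "(real ^ 'n::finite) set"
  assumes "affine H" "p \<in> H" and coord: "\<And>i. i \<in> S \<Longrightarrow> \<exists>c. c \<noteq> 0 \<and> p + c *\<^sub>R charvec {i} \<in> H"
    and v: "v \<in> supported_on S"
  shows "p + v \<in> H"
proof -
  obtain c where c: "\<And>i. i \<in> S \<Longrightarrow> c i \<noteq> 0 \<and> p + c i *\<^sub>R charvec {i} \<in> H"
    using coord by metis
  have "p + (\<Sum>i\<in>S. (v $ i / c i) *\<^sub>R (c i *\<^sub>R charvec {i})) \<in> H"
    using c by (intro affine_add_sum_mem[OF assms(1,2)]) auto
  moreover have "(\<Sum>i\<in>S. (v $ i / c i) *\<^sub>R (c i *\<^sub>R charvec {i})) = v"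
    unfolding vec_eq_iff
  proof
    fix j
    have "(\<Sum>i\<in>S. (v $ i / c i) *\<^sub>R (c i *\<^sub>R charvec {i})) $ j
          = (\<Sum>i\<in>S. v $ i / c i * (c i * (if j = i then 1 else 0)))"
      by (simp only: sum_component vector_scaleR_component charvec_nth singleton_iff real_scaleR_def)
    also have "\<dots> = (\<Sum>i\<in>S. if j = i then v $ i else 0)"
      by (rule sum.cong) (use c in auto)
    also have "\<dots> = v $ j"
      using v by (simp add: supported_on_def)
    finally show "(\<Sum>i\<in>S. (v $ i / c i) *\<^sub>R (c i *\<^sub>R charvec {i})) $ j = v $ j" .
  qed
  ultimately show ?thesis
    by simp
qed

lemma affine_hull_insert_facet:
  fixes Q :: "'n::euclidean_space set"
  assumes "convex Q" "F facet_of Q" "q \<in> Q" "q \<notin> F"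
  shows "affine hull (insert q F) = affine hull Q"
proof (rule affine_dim_equal)
  have "q \<notin> affine hull F"
    using assms face_of_imp_eq_affine_Int[of Q F] by (auto simp: facet_of_def)
  then show "aff_dim (affine hull (insert q F)) = aff_dim (affine hull Q)"
    using assms(2) by (simp add: aff_dim_insert facet_of_def)
  show "affine hull (insert q F) \<subseteq> affine hull Q"
    using assms(2,3) by (intro hull_mono) (auto dest: facet_of_imp_subset)
qed auto

lemma facet_of_affine_hull_insert:
  fixes P :: "'n::euclidean_space set"
  assumes "convex P" "F face_of P" "F \<noteq> {}" "q \<in> P" "q \<notin> F"
    and "P \<subseteq> affine hull (insert q F)"
  shows "F facet_of P"
proof -
  have "aff_dim P \<le> aff_dim (insert q F)"
    using aff_dim_subset[OF assms(6)] by simp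
  also have "\<dots> \<le> aff_dim F + 1"
    by (simp add: aff_dim_insert)
  finally have "aff_dim P \<le> aff_dim F + 1" .
  moreover have "aff_dim F < aff_dim P"
    using assms by (intro face_of_aff_dim_lt) auto
  ultimately show ?thesis
    using assms(2,3) by (simp add: facet_of_def)
qed

lemma chordal_if_all_pairs_but_one:
  assumes "all_pairs V - {e} \<subseteq> F"
  shows "chordal V F"
  unfolding chordal_def
proof (intro allI impI)
  fix cs :: "'a list"
  let ?n = "length cs"
  assume cs: "distinct cs \<and> 4 \<le> ?n \<and> set cs \<subseteq> V \<and>
    (\<forall>i<?n. {cs ! i, cs ! ((i + 1) mod ?n)} \<in> F)"
  have pair: "{cs ! i, cs ! j} \<in> all_pairs V" if "i < ?n" "j < ?n" "i \<noteq> j" for i j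
  proof -
    have "cs ! i \<noteq> cs ! j"
      using cs that by (simp add: nth_eq_iff_index_eq)
    then show ?thesis
      using cs nth_mem[OF that(1)] nth_mem[OF that(2)] unfolding all_pairs_def by blast
  qed
  have "{cs ! 0, cs ! 2} \<noteq> {cs ! 1, cs ! 3}"
    using cs by (auto simp: doubleton_eq_iff nth_eq_iff_index_eq)
  then obtain i where i: "i \<in> {0, 1}" "{cs ! i, cs ! (i + 2)} \<noteq> e"
  proof (cases "{cs ! 0, cs ! 2} = e")
    case True
    then show ?thesis
      using that[of 1] \<open>{cs ! 0, cs ! 2} \<noteq> {cs ! 1, cs ! 3}\<close> by (simp add: numeral_3_eq_3)
  next
    case False
    then show ?thesis
      using that[of 0] by (simp add: numeral_2_eq_2)
  qed
  then have "{cs ! i, cs ! (i + 2)} \<in> F"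
    using assms pair[of i "i + 2"] cs by auto
  moreover have "i + 2 < ?n" "i + 2 \<noteq> (i + 1) mod ?n"
    using i(1) cs by auto
  moreover have "i \<noteq> (i + 2 + 1) mod ?n"
    using i(1) cs by (cases "?n = 4") auto
  ultimately show "\<exists>i<?n. \<exists>j<?n. i \<noteq> j \<and> j \<noteq> (i + 1) mod ?n \<and>
      i \<noteq> (j + 1) mod ?n \<and> {cs ! i, cs ! j} \<in> F"
    by (intro exI[of _ i] exI[of _ "i + 2"]) auto
qed

lemma nonedges_Un: "nonedges V (E \<union> E') = nonedges V E - E'"
  by (auto simp: nonedges_def)

lemma chordal_completions_supported: "chordal_completions V E \<subseteq> supported_on (nonedges V E)"
  by (auto simp: chordal_completions_def supported_on_def)

lemma chordal_completions_nth: "x \<in> chordal_completions V E \<Longrightarrow> x $ f \<in> {0, 1}"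
  by (cases "f \<in> nonedges V E") (auto simp: chordal_completions_def)

lemma charvec_mem_chordal_completions:
  assumes "S \<subseteq> nonedges V E" "chordal V (E \<union> S)"
  shows "charvec S \<in> chordal_completions V E"
proof -
  have "{f \<in> nonedges V E. charvec S $ f = 1} = S"
    using assms(1) by auto
  then show ?thesis
    using assms by (auto simp: chordal_completions_def)
qed

lemma supported_on_subset_affine_hull_chordal_completions:
  "supported_on (nonedges V E) \<subseteq> affine hull chordal_completions V E"
proof
  fix v :: "real ^ 'a set"
  assume v: "v \<in> supported_on (nonedges V E)"
  let ?N = "nonedges V E"
  have complete: "all_pairs V - {e} \<subseteq> E \<union> (?N - {e})" for e
    by (auto simp: nonedges_def)
  have "charvec ?N + (v - charvec ?N) \<in> affine hull chordal_completions V E"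
  proof (rule affine_add_supported_mem[where S = ?N])
    show "charvec ?N \<in> affine hull chordal_completions V E"
      using chordal_if_all_pairs_but_one[of V "{}" "E \<union> ?N"]
      by (intro hull_inc charvec_mem_chordal_completions) (auto simp: nonedges_def)
    show "\<exists>c. c \<noteq> 0 \<and> charvec ?N + c *\<^sub>R charvec {f} \<in> affine hull chordal_completions V E"
      if "f \<in> ?N" for f
    proof (intro exI conjI)
      have "charvec ?N + (- 1) *\<^sub>R charvec {f} = charvec (?N - {f})"
        using that by (auto simp: vec_eq_iff)
      then show "charvec ?N + (- 1) *\<^sub>R charvec {f} \<in> affine hull chordal_completions V E"
        using complete[of f] chordal_if_all_pairs_but_one
        by (auto intro!: hull_inc charvec_mem_chordal_completions)
    qed simp
    show "v - charvec ?N \<in> supported_on ?N"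
      using v by (simp add: supported_on_def)
  qed simp
  then show "v \<in> affine hull chordal_completions V E"
    by simp
qed

lemma charvec_add_mem_chordal_completions:
  assumes "E' \<subseteq> nonedges V E" "y \<in> chordal_completions V (E \<union> E')"
  shows "charvec E' + y \<in> chordal_completions V E"
proof -
  have "{f \<in> nonedges V E. (charvec E' + y) $ f = 1} = E' \<union> {f \<in> nonedges V (E \<union> E'). y $ f = 1}"
    using assms by (auto simp: chordal_completions_def nonedges_Un)
  then show ?thesis
    using assms by (auto simp: chordal_completions_def nonedges_Un Un_assoc)
qed

lemma diff_charvec_mem_chordal_completions:
  assumes "E' \<subseteq> nonedges V E" "x \<in> chordal_completions V E" "\<forall>f\<in>E'. x $ f = 1"
  shows "x - charvec E' \<in> chordal_completions V (E \<union> E')"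
proof -
  have "E \<union> E' \<union> {f \<in> nonedges V (E \<union> E'). (x - charvec E') $ f = 1}
        = E \<union> {f \<in> nonedges V E. x $ f = 1}"
    using assms by (auto simp: nonedges_Un)
  then show ?thesis
    using assms by (auto simp: chordal_completions_def nonedges_Un)
qed

locale facet_lifting =
  fixes V :: "'a::finite set" and E E' :: "'a set set"
    and a :: "real ^ ('a set)" and b :: real
  assumes E'_nonedges: "E' \<subseteq> nonedges V E"
    and minimal: "\<And>f. f \<in> E' \<Longrightarrow> chordal V (E \<union> (E' - {f}))"
    and a_supported: "a \<in> supported_on (nonedges V (E \<union> E'))"
    and a_nonneg: "\<And>f. f \<in> nonedges V (E \<union> E') \<Longrightarrow> 0 \<le> a $ f"
    and facet: "facet_defining (convex hull chordal_completions V (E \<union> E')) (\<lambda>x. a \<bullet> x) (\<lambda>x. b)"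
begin

abbreviation "P \<equiv> convex hull chordal_completions V E"
abbreviation "Q \<equiv> convex hull chordal_completions V (E \<union> E')"

definition lifted_rhs :: "real ^ ('a set) \<Rightarrow> real" where
  "lifted_rhs x = b * (charvec E' \<bullet> x - real (card E') + 1)"

abbreviation "F \<equiv> {x \<in> P. a \<bullet> x = lifted_rhs x}"

lemma a_valid: "y \<in> Q \<Longrightarrow> b \<le> a \<bullet> y"
  using facet by (simp add: facet_defining_def)

lemma facet_Q: "{y \<in> Q. a \<bullet> y = b} facet_of Q"
  using facet by (simp add: facet_defining_def)

lemma Q_supported: "Q \<subseteq> supported_on (nonedges V E - E')"
  using chordal_completions_supported[of V "E \<union> E'"]
  by (intro hull_minimal) (auto simp: nonedges_Un subspace_imp_convex subspace_supported_on)

lemma inner_a_charvec_subset: "S \<subseteq> E' \<Longrightarrow> a \<bullet> charvec S = 0"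
proof -
  assume "S \<subseteq> E'"
  then have "a $ i = 0" if "i \<in> S" for i
    using a_supported that by (auto simp: supported_on_def nonedges_Un)
  then show ?thesis
    unfolding inner_commute[of a] inner_charvec by simp
qed

lemma inner_a_nonneg: "(\<And>f. 0 \<le> x $ f) \<Longrightarrow> 0 \<le> a \<bullet> x"
proof -
  assume x: "\<And>f. 0 \<le> x $ f"
  have "0 \<le> a $ f * x $ f" for f
    using a_nonneg[of f] a_supported x[of f]
    by (cases "f \<in> nonedges V (E \<union> E')") (auto simp: supported_on_def)
  then show ?thesis
    by (simp add: inner_vec_def sum_nonneg)
qed

lemma b_nonneg: "0 \<le> b"
proof -
  have "Q \<subseteq> {y. 0 \<le> a \<bullet> y}"
  proof (rule hull_minimal)
    show "chordal_completions V (E \<union> E') \<subseteq> {y. 0 \<le> a \<bullet> y}"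
    proof
      fix y
      assume "y \<in> chordal_completions V (E \<union> E')"
      then have "0 \<le> y $ f" for f
        using chordal_completions_nth[of y V "E \<union> E'" f] by auto
      then show "y \<in> {y. 0 \<le> a \<bullet> y}"
        by (simp add: inner_a_nonneg)
    qed
  qed (rule convex_halfspace_ge)
  moreover obtain y where "y \<in> Q" "a \<bullet> y = b"
    using facet_Q by (auto simp: facet_of_def)
  ultimately show ?thesis
    by auto
qed

lemma charvec_add_mem_P: "y \<in> Q \<Longrightarrow> charvec E' + y \<in> P"
proof -
  have "(\<lambda>x. charvec E' + x) ` Q = convex hull ((\<lambda>x. charvec E' + x) ` chordal_completions V (E \<union> E'))"
    by (rule convex_hull_translation[symmetric])
  also have "\<dots> \<subseteq> P"
    using charvec_add_mem_chordal_completions[OF E'_nonedges] by (intro hull_mono) auto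
  finally show "y \<in> Q \<Longrightarrow> charvec E' + y \<in> P"
    by auto
qed

lemma charvec_add_mem_F_iff: "y \<in> Q \<Longrightarrow> charvec E' + y \<in> F \<longleftrightarrow> a \<bullet> y = b"
proof -
  assume y: "y \<in> Q"
  have "charvec E' \<bullet> y = 0"
    using Q_supported y by (auto simp: inner_charvec supported_on_def intro!: sum.neutral)
  then have "lifted_rhs (charvec E' + y) = b"
    by (simp add: lifted_rhs_def inner_add_right inner_charvec)
  then show ?thesis
    using y charvec_add_mem_P inner_a_charvec_subset[of E'] by (simp add: inner_add_right)
qed

lemma lifted_rhs_le_on_completions:
  assumes x: "x \<in> chordal_completions V E"
  shows "lifted_rhs x \<le> a \<bullet> x"
proof (cases "\<forall>f\<in>E'. x $ f = 1")
  case True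
  have "x - charvec E' \<in> Q"
    using diff_charvec_mem_chordal_completions[OF E'_nonedges x True] by (rule hull_inc)
  then have "b \<le> a \<bullet> x"
    using a_valid inner_a_charvec_subset[of E'] by (fastforce simp: inner_diff_right)
  moreover have "charvec E' \<bullet> x = real (card E')"
    using True by (simp add: inner_charvec)
  ultimately show ?thesis
    by (simp add: lifted_rhs_def)
next
  case False
  have x01: "x $ g \<in> {0, 1}" for g
    using x by (rule chordal_completions_nth)
  have x_ge_0: "0 \<le> x $ g" and x_le_1: "x $ g \<le> 1" for g
    using x01[of g] by auto
  obtain f where f: "f \<in> E'" "x $ f = 0"
    using False x01 by blast
  have "charvec E' \<bullet> x = (\<Sum>g\<in>E' - {f}. x $ g)"
    using f by (simp add: inner_charvec sum.remove)
  also have "\<dots> \<le> real (card (E' - {f}))"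
    using sum_bounded_above[of "E' - {f}" "\<lambda>g. x $ g" 1, OF x_le_1] by simp
  also have "\<dots> = real (card E') - 1"
    using f by (cases "card E'") (auto simp: card_eq_0_iff)
  finally have "lifted_rhs x \<le> 0"
    using b_nonneg by (simp add: lifted_rhs_def mult_nonneg_nonpos)
  moreover have "0 \<le> a \<bullet> x"
    using x_ge_0 by (rule inner_a_nonneg)
  ultimately show ?thesis
    by linarith
qed

lemma lifted_slack: "a \<bullet> x - lifted_rhs x = (a - b *\<^sub>R charvec E') \<bullet> x - (b - b * real (card E'))"
  by (simp add: lifted_rhs_def inner_diff_left algebra_simps)

lemma lifted_rhs_le_iff: "lifted_rhs x \<le> a \<bullet> x \<longleftrightarrow> b - b * real (card E') \<le> (a - b *\<^sub>R charvec E') \<bullet> x"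
  using lifted_slack[of x] by linarith

lemma lifted_rhs_eq_iff: "a \<bullet> x = lifted_rhs x \<longleftrightarrow> (a - b *\<^sub>R charvec E') \<bullet> x = b - b * real (card E')"
  using lifted_slack[of x] by linarith

lemma lifted_valid: "x \<in> P \<Longrightarrow> lifted_rhs x \<le> a \<bullet> x"
proof -
  have "P \<subseteq> {x. b - b * real (card E') \<le> (a - b *\<^sub>R charvec E') \<bullet> x}"
  proof (rule hull_minimal)
    show "chordal_completions V E \<subseteq> {x. b - b * real (card E') \<le> (a - b *\<^sub>R charvec E') \<bullet> x}"
      using lifted_rhs_le_on_completions by (auto simp flip: lifted_rhs_le_iff)
  qed (rule convex_halfspace_ge)
  then show "x \<in> P \<Longrightarrow> lifted_rhs x \<le> a \<bullet> x"
    by (auto simp: lifted_rhs_le_iff)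
qed

lemma lifted_face: "F face_of P"
proof -
  have "F = P \<inter> {x. (a - b *\<^sub>R charvec E') \<bullet> x = b - b * real (card E')}"
    by (auto simp: lifted_rhs_eq_iff)
  also have "\<dots> face_of P"
    using lifted_valid
    by (intro face_of_Int_supporting_hyperplane_ge convex_convex_hull) (simp add: lifted_rhs_le_iff)
  finally show ?thesis .
qed

lemma charvec_remove_mem_F: "f \<in> E' \<Longrightarrow> charvec (E' - {f}) \<in> F"
proof -
  assume f: "f \<in> E'"
  have "charvec (E' - {f}) \<in> P"
    using E'_nonedges minimal[OF f] by (auto intro!: hull_inc charvec_mem_chordal_completions)
  moreover have "charvec E' \<bullet> charvec (E' - {f}) = real (card E') - 1"
    using f by (cases "card E'") (auto simp: inner_charvec sum.remove card_eq_0_iff)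
  ultimately show ?thesis
    using inner_a_charvec_subset[of "E' - {f}"] by (simp add: lifted_rhs_def)
qed

lemma P_subset_affine_hull_insert:
  assumes q: "q \<in> Q" "a \<bullet> q \<noteq> b"
  shows "P \<subseteq> affine hull (insert (charvec E' + q) F)"
proof -
  let ?H = "affine hull (insert (charvec E' + q) F)"
  have shift: "charvec E' + y \<in> ?H" if "y \<in> supported_on (nonedges V E - E')" for y
  proof -
    have "y \<in> affine hull Q"
      using that supported_on_subset_affine_hull_chordal_completions[of V "E \<union> E'"]
        hull_mono[OF hull_subset[of "chordal_completions V (E \<union> E')" convex], of affine]
      by (auto simp: nonedges_Un)
    also have "\<dots> = affine hull (insert q {y \<in> Q. a \<bullet> y = b})"
      using q facet_Q by (intro affine_hull_insert_facet[symmetric]) auto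
    finally have "charvec E' + y \<in> (\<lambda>x. charvec E' + x) ` (affine hull (insert q {y \<in> Q. a \<bullet> y = b}))"
      by blast
    also have "\<dots> = affine hull ((\<lambda>x. charvec E' + x) ` insert q {y \<in> Q. a \<bullet> y = b})"
      by (rule affine_hull_translation[symmetric])
    also have "\<dots> \<subseteq> ?H"
      using q charvec_add_mem_P charvec_add_mem_F_iff by (intro hull_mono) auto
    finally show ?thesis .
  qed
  have "x \<in> ?H" if x: "x \<in> chordal_completions V E" for x
  proof -
    have "charvec E' + (x - charvec E') \<in> ?H"
    proof (rule affine_add_supported_mem[where S = "nonedges V E"])
      show "charvec E' \<in> ?H"
        using shift[of 0] by (simp add: supported_on_def)
      show "\<exists>c. c \<noteq> 0 \<and> charvec E' + c *\<^sub>R charvec {f} \<in> ?H" if "f \<in> nonedges V E" for f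
      proof (cases "f \<in> E'")
        case True
        have "charvec E' + (- 1) *\<^sub>R charvec {f} = charvec (E' - {f})"
          using True by (auto simp: vec_eq_iff)
        then show ?thesis
          using charvec_remove_mem_F[OF True] by (intro exI[of _ "- 1"]) (auto intro: hull_inc)
      next
        case False
        then show ?thesis
          using that shift[of "charvec {f}"] by (intro exI[of _ 1]) (simp add: supported_on_def)
      qed
      show "x - charvec E' \<in> supported_on (nonedges V E)"
        using x E'_nonedges chordal_completions_supported by (force simp: supported_on_def)
    qed simp
    then show ?thesis
      by simp
  qed
  then show ?thesis
    by (intro hull_minimal) (auto intro: affine_imp_convex)
qed

theorem lifted_facet: "F facet_of P"
proof -
  have "{y \<in> Q. a \<bullet> y = b} \<noteq> Q"
    using facet_Q by auto
  then obtain q where q: "q \<in> Q" "a \<bullet> q \<noteq> b"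
    by blast
  obtain y where y: "y \<in> Q" "a \<bullet> y = b"
    using facet_Q by (auto simp: facet_of_def)
  show ?thesis
  proof (rule facet_of_affine_hull_insert)
    show "F \<noteq> {}"
      using y charvec_add_mem_F_iff by blast
    show "charvec E' + q \<in> P" "charvec E' + q \<notin> F"
      using q charvec_add_mem_P charvec_add_mem_F_iff by auto
  qed (use q lifted_face P_subset_affine_hull_insert in auto)
qed

end

theorem mainTheorem14:
  fixes V :: "'a::finite set" and E E' :: "'a set set"
    and a :: "real ^ ('a set)" and b :: real
  assumes "simple_graph V E"
    and "E' \<subseteq> nonedges V E"
    and "\<not> chordal V (E \<union> E')"
    and "\<forall>f \<in> E'. chordal V (E \<union> (E' - {f}))"
    and "\<forall>f. f \<notin> nonedges V (E \<union> E') \<longrightarrow> a $ f = 0"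
    and "\<forall>f \<in> nonedges V (E \<union> E'). a $ f \<ge> 0"
    and "facet_defining (convex hull chordal_completions V (E \<union> E')) (\<lambda>x. a \<bullet> x) (\<lambda>x. b)"
  shows "facet_defining (convex hull chordal_completions V E)
           (\<lambda>x. (\<chi> f. if f \<in> nonedges V E - E' then a $ f else 0) \<bullet> x)
           (\<lambda>x. b * ((\<Sum>f \<in> E'. x $ f) - real (card E') + 1))"
proof -
  interpret facet_lifting V E E' a b
    using assms(2,4-7) by unfold_locales (auto simp: supported_on_def)
  have "(\<chi> f. if f \<in> nonedges V E - E' then a $ f else 0) = a"
    using assms(5) by (auto simp: vec_eq_iff nonedges_Un)
  moreover have "(\<lambda>x. b * ((\<Sum>f \<in> E'. x $ f) - real (card E') + 1)) = lifted_rhs"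
    by (auto simp: lifted_rhs_def inner_charvec)
  ultimately show ?thesis
    using lifted_valid lifted_facet by (simp add: facet_defining_def)
qed

end
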